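(* Let $Q=\sum_{n\ge1}\frac{q_n}{n_\psi!}\partial_\psi^n$ be a $\partial_\psi$-delta operator (so $q_1\ne0$) with $\partial_\psi$-basic polynomial sequence $(p_n)_{n\ge0}$, and let $q(t)=\sum_{n\ge1}\frac{q_n}{n_\psi!}t^n\in F[[t]]$ with compositional inverse $q^{-1}(z)\in F[[z]]$. Then, as formal power series in $z$ with coefficients in $P$, $$\sum_{k\ge0}\frac{p_k(x)}{k_\psi!}z^k=\exp_\psi\{x\,q^{-1}(z)\},\qquad \exp_\psi(u):=\sum_{n\ge0}\frac{u^n}{n_\psi!}.$$
   Context: Let $F$ be a field of characteristic $0$, $P=F[x]$. Fix $(\psi_n)_{n\ge0}$ in $F$ with $\psi_0=1$, $\psi_n\ne0$, $\psi_{-1}=0$; $n_\psi=\psi_{n-1}/\psi_n$, $n_\psi!=1/\psi_n$, $0_\psi!=1$. $\partial_\psi x^n=n_\psi x^{n-1}$ (linear); $E^a(\partial_\psi)=\sum_k\frac{a^k}{k_\psi!}\partial_\psi^k$. A $\partial_\psi$-delta operator is a linear $Q:P\to P$ commuting with all $E^a(\partial_\psi)$, $a\in F$, with $Q(x)$ a nonzero constant. Its $\partial_\psi$-basic sequence: $\deg p_n=n$, $p_0=1$, $p_n(0)=0$ for $n>0$, $Qp_n=n_\psi p_{n-1}$. *)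

theory Defs
  imports "HOL-Computational_Algebra.Computational_Algebra"
begin

text \<open>Standing data: a sequence psi :: nat => 'a with psi 0 = 1, psi n \<noteq> 0;
  psi(-1) = 0 is encoded in n_psi 0 = 0.\<close>

definition psi_seq :: "(nat \<Rightarrow> 'a::field_char_0) \<Rightarrow> bool" where
  "psi_seq \<psi> \<longleftrightarrow> \<psi> 0 = 1 \<and> (\<forall>n. \<psi> n \<noteq> 0)"

definition n_psi :: "(nat \<Rightarrow> 'a::field_char_0) \<Rightarrow> nat \<Rightarrow> 'a" where
  "n_psi \<psi> n = (if n = 0 then 0 else \<psi> (n - 1) / \<psi> n)"

definition psi_fact :: "(nat \<Rightarrow> 'a::field_char_0) \<Rightarrow> nat \<Rightarrow> 'a" where
  "psi_fact \<psi> n = 1 / \<psi> n"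

definition psi_deriv :: "(nat \<Rightarrow> 'a::field_char_0) \<Rightarrow> 'a poly \<Rightarrow> 'a poly" where
  "psi_deriv \<psi> p = (\<Sum>n\<le>degree p. smult (coeff p n * n_psi \<psi> n) (monom 1 (n - 1)))"

text \<open>E^a(partial_psi) = sum_k a^k/k_psi! partial_psi^k (locally finite: partial_psi^k p = 0 for k > deg p).\<close>
definition psi_shift :: "(nat \<Rightarrow> 'a::field_char_0) \<Rightarrow> 'a \<Rightarrow> 'a poly \<Rightarrow> 'a poly" where
  "psi_shift \<psi> a p = (\<Sum>k\<le>degree p. smult (a ^ k / psi_fact \<psi> k) ((psi_deriv \<psi> ^^ k) p))"

definition psi_delta_op :: "(nat \<Rightarrow> 'a::field_char_0) \<Rightarrow> ('a poly \<Rightarrow> 'a poly) \<Rightarrow> bool" where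
  "psi_delta_op \<psi> Q \<longleftrightarrow>
     (\<forall>p r. Q (p + r) = Q p + Q r) \<and> (\<forall>c p. Q (smult c p) = smult c (Q p)) \<and>
     (\<forall>a p. Q (psi_shift \<psi> a p) = psi_shift \<psi> a (Q p)) \<and>
     (\<exists>c. c \<noteq> 0 \<and> Q [:0, 1:] = [:c:])"

definition psi_basic_seq :: "(nat \<Rightarrow> 'a::field_char_0) \<Rightarrow> ('a poly \<Rightarrow> 'a poly) \<Rightarrow> (nat \<Rightarrow> 'a poly) \<Rightarrow> bool" where
  "psi_basic_seq \<psi> Q p \<longleftrightarrow>
     (\<forall>n. degree (p n) = n) \<and> p 0 = 1 \<and> (\<forall>n>0. poly (p n) 0 = 0) \<and>
     (\<forall>n>0. Q (p n) = smult (n_psi \<psi> n) (p (n - 1)))"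

definition psi_series_op :: "(nat \<Rightarrow> 'a::field_char_0) \<Rightarrow> (nat \<Rightarrow> 'a) \<Rightarrow> 'a poly \<Rightarrow> 'a poly" where
  "psi_series_op \<psi> q p = (\<Sum>n\<in>{1..degree p}. smult (q n / psi_fact \<psi> n) ((psi_deriv \<psi> ^^ n) p))"

definition psi_indicator :: "(nat \<Rightarrow> 'a::field_char_0) \<Rightarrow> (nat \<Rightarrow> 'a) \<Rightarrow> 'a fps" where
  "psi_indicator \<psi> q = Abs_fps (\<lambda>n. if n = 0 then 0 else q n / psi_fact \<psi> n)"

definition exp_psi :: "(nat \<Rightarrow> 'a::field_char_0) \<Rightarrow> 'a poly fps" where
  "exp_psi \<psi> = Abs_fps (\<lambda>n. [: 1 / psi_fact \<psi> n :])"

end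

theory Submission
  imports Defs
begin

text \<open>Let \<open>c = q(t)\<close> and \<open>I = q\<^sup>-\<^sup>1\<close>. The coefficient of \<open>z\<^sup>k\<close> in \<open>exp\<^sub>\<psi>(x I(z))\<close> is
  \<open>s\<^sub>k(x)/k\<^sub>\<psi>!\<close> with \<open>s\<^sub>k(x) = \<Sum>\<^sub>i \<psi>\<^sub>i/\<psi>\<^sub>k [z\<^sup>k]I\<^sup>i x\<^sup>i\<close>. As \<open>\<partial>\<^sub>\<psi>\<^sup>n x\<^sup>j = \<psi>\<^sub>j\<^sub>-\<^sub>n/\<psi>\<^sub>j x\<^sup>j\<^sup>-\<^sup>n\<close>,
  comparing coefficients of \<open>x\<^sup>m\<close> reduces \<open>Q s\<^sub>k = k\<^sub>\<psi> s\<^sub>k\<^sub>-\<^sub>1\<close> to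
  \<open>\<Sum>\<^sub>n c\<^sub>n [z\<^sup>k]I\<^sup>m\<^sup>+\<^sup>n = [z\<^sup>k\<^sup>-\<^sup>1]I\<^sup>m\<close>, the coefficient of \<open>z\<^sup>k\<close> in \<open>(c \<circ> I)\<cdot>I\<^sup>m = z\<cdot>I\<^sup>m\<close>.
  Hence \<open>(s\<^sub>k)\<close> is a basic sequence of \<open>Q\<close>. Because \<open>q\<^sub>1 \<noteq> 0\<close>, \<open>Q\<close> lowers degrees by exactly one,
  so its kernel consists of constants and the basic sequence is unique: \<open>p\<^sub>k = s\<^sub>k\<close>.\<close>

lemma coeff_psi_deriv:
  "coeff (psi_deriv \<psi> p) m = coeff p (Suc m) * n_psi \<psi> (Suc m)"
proof -
  have "coeff (psi_deriv \<psi> p) m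
      = (\<Sum>n\<le>degree p. (coeff p n * n_psi \<psi> n) * (if n - 1 = m then 1 else 0))"
    unfolding psi_deriv_def by (simp add: coeff_sum coeff_monom)
  also have "\<dots> = (\<Sum>n\<le>degree p. if n = Suc m then coeff p n * n_psi \<psi> n else 0)"
    by (intro sum.cong) (auto simp: n_psi_def)
  also have "\<dots> = coeff p (Suc m) * n_psi \<psi> (Suc m)"
    by (auto simp: coeff_eq_0)
  finally show ?thesis .
qed

lemma coeff_psi_deriv_funpow:
  assumes "psi_seq \<psi>"
  shows "coeff ((psi_deriv \<psi> ^^ n) p) m = coeff p (m + n) * \<psi> m / \<psi> (m + n)"
proof (induction n arbitrary: m)
  case 0
  then show ?case using assms by (simp add: psi_seq_def)
next
  case (Suc n)
  have "coeff ((psi_deriv \<psi> ^^ Suc n) p) m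
      = coeff p (Suc m + n) * \<psi> (Suc m) / \<psi> (Suc m + n) * n_psi \<psi> (Suc m)"
    by (simp add: coeff_psi_deriv Suc)
  also have "\<dots> = coeff p (m + Suc n) * \<psi> m / \<psi> (m + Suc n)"
    using assms by (simp add: n_psi_def psi_seq_def)
  finally show ?case .
qed

lemma coeff_psi_series_op:
  assumes "psi_seq \<psi>" "degree r \<le> N"
  shows "coeff (psi_series_op \<psi> q r) m
       = (\<Sum>n\<in>{1..N}. q n * \<psi> n * coeff r (m + n) * \<psi> m / \<psi> (m + n))"
proof -
  have "coeff (psi_series_op \<psi> q r) m
      = (\<Sum>n\<in>{1..degree r}. q n * \<psi> n * coeff r (m + n) * \<psi> m / \<psi> (m + n))"
    unfolding psi_series_op_def using assms(1)
    by (simp add: coeff_sum coeff_psi_deriv_funpow psi_fact_def mult.assoc)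
  also have "\<dots> = (\<Sum>n\<in>{1..N}. q n * \<psi> n * coeff r (m + n) * \<psi> m / \<psi> (m + n))"
    using assms(2) by (intro sum.mono_neutral_left) (auto simp: coeff_eq_0)
  finally show ?thesis .
qed

lemma degree_eq_0_if_psi_series_op_eq_0:
  assumes psi: "psi_seq \<psi>" and q1: "q 1 \<noteq> 0" and Qr: "psi_series_op \<psi> q r = 0"
  shows "degree r = 0"
proof (rule ccontr)
  assume "degree r \<noteq> 0"
  then obtain d where d: "degree r = Suc d" by (cases "degree r") auto
  have nz: "\<psi> n \<noteq> 0" for n using psi by (simp add: psi_seq_def)
  let ?term = "\<lambda>n. q n * \<psi> n * coeff r (d + n) * \<psi> d / \<psi> (d + n)"
  have "coeff (psi_series_op \<psi> q r) d = (\<Sum>n\<in>{1..Suc d}. ?term n)"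
    by (rule coeff_psi_series_op[OF psi]) (simp add: d)
  also have "\<dots> = ?term 1 + (\<Sum>n\<in>{Suc 1..Suc d}. ?term n)"
    by (subst sum.atLeast_Suc_atMost) auto
  also have "(\<Sum>n\<in>{Suc 1..Suc d}. ?term n) = 0"
    by (intro sum.neutral) (auto simp: coeff_eq_0 d)
  finally have "coeff (psi_series_op \<psi> q r) d = q 1 * \<psi> 1 * lead_coeff r * \<psi> d / \<psi> (Suc d)"
    by (simp add: d)
  moreover have "lead_coeff r \<noteq> 0"
    using d by (intro leading_coeff_neq_0) auto
  ultimately show False
    using Qr q1 nz by simp
qed

lemma psi_basic_seq_unique:
  assumes additive: "\<And>a b. Q (a + b) = Q a + Q b"
    and kernel: "\<And>r. Q r = 0 \<Longrightarrow> degree r = 0"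
    and p: "psi_basic_seq \<psi> Q p" and p': "psi_basic_seq \<psi> Q p'"
  shows "p k = p' k"
proof (induction k rule: less_induct)
  case (less k)
  have diff: "Q (a - b) = Q a - Q b" for a b
    using additive[of "a - b" b] by (simp add: algebra_simps)
  show ?case
  proof (cases "k = 0")
    case True
    then show ?thesis using p p' by (simp add: psi_basic_seq_def)
  next
    case False
    then have "Q (p k - p' k) = 0"
      using p p' less[of "k - 1"] by (simp add: diff psi_basic_seq_def)
    then have "degree (p k - p' k) = 0"
      by (rule kernel)
    moreover have "coeff (p k - p' k) 0 = 0"
      using p p' False by (simp add: psi_basic_seq_def flip: poly_0_coeff_0)
    ultimately show ?thesis
      by (metis degree_0_id pCons_0_0 eq_iff_diff_eq_0)
  qed
qed

lemma sum_nth_mult_power_right_inverse: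
  fixes c I :: "'a::field fps"
  assumes c0: "c $ 0 = 0" and I0: "I $ 0 = 0" and inv: "c oo I = fps_X" and k: "k > 0"
  shows "(\<Sum>n\<in>{1..k}. c $ n * (I ^ (m + n)) $ k) = (I ^ m) $ (k - 1)"
proof -
  have high_powers: "(I ^ j) $ k = 0" if "j > k" for j
    using startsby_zero_power_prefix[OF I0] that by auto
  have "(c * fps_X ^ m) oo I = (c oo I) * (fps_X ^ m oo I)"
    by (rule fps_compose_mult_distrib[OF I0])
  also have "\<dots> = fps_X * I ^ m"
    by (simp add: inv fps_X_power_compose[OF I0])
  finally have "((c * fps_X ^ m) oo I) $ k = (I ^ m) $ (k - 1)"
    using k by (simp add: fps_X_mult_nth)
  moreover
  have "((c * fps_X ^ m) oo I) $ k = (\<Sum>i=0..k. (if i < m then 0 else c $ (i - m)) * (I ^ i) $ k)"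
    by (simp add: fps_compose_nth fps_X_power_mult_right_nth)
  also have "\<dots> = (\<Sum>i=0..m+k. (if i < m then 0 else c $ (i - m)) * (I ^ i) $ k)"
    by (intro sum.mono_neutral_left) (auto simp: high_powers)
  also have "\<dots> = (\<Sum>i\<in>{m..m+k}. c $ (i - m) * (I ^ i) $ k)"
    by (intro sum.mono_neutral_cong_right) auto
  also have "\<dots> = (\<Sum>n=0..k. c $ n * (I ^ (m + n)) $ k)"
    using sum.shift_bounds_cl_nat_ivl[of "\<lambda>i. c $ (i - m) * (I ^ i) $ k" 0 m k]
    by (simp add: add.commute)
  also have "\<dots> = (\<Sum>n\<in>{1..k}. c $ n * (I ^ (m + n)) $ k)"
    using c0 by (simp add: sum.atLeast_Suc_atMost)
  ultimately show ?thesis by simp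
qed

definition psi_basic_poly :: "(nat \<Rightarrow> 'a::field_char_0) \<Rightarrow> 'a fps \<Rightarrow> nat \<Rightarrow> 'a poly" where
  "psi_basic_poly \<psi> I k = (\<Sum>i\<le>k. monom (\<psi> i / \<psi> k * (I ^ i) $ k) i)"

lemma coeff_psi_basic_poly:
  assumes "I $ 0 = 0"
  shows "coeff (psi_basic_poly \<psi> I k) j = \<psi> j / \<psi> k * (I ^ j) $ k"
  using startsby_zero_power_prefix[OF assms]
  by (auto simp: psi_basic_poly_def coeff_sum coeff_monom)

lemma fps_inv_psi_indicator:
  assumes psi: "psi_seq \<psi>" and q1: "q 1 \<noteq> 0"
  defines "I \<equiv> fps_inv (psi_indicator \<psi> q)"
  shows "I $ 0 = 0" "I $ 1 \<noteq> 0" "psi_indicator \<psi> q oo I = fps_X"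
proof -
  have "psi_indicator \<psi> q $ 1 \<noteq> 0"
    using psi q1 by (simp add: psi_indicator_def psi_fact_def psi_seq_def)
  then show inv: "psi_indicator \<psi> q oo I = fps_X"
    unfolding I_def by (intro fps_inv_right) (simp_all add: psi_indicator_def)
  show I0: "I $ 0 = 0"
    by (simp add: I_def fps_inv_def)
  have "(psi_indicator \<psi> q oo I) $ 1 = psi_indicator \<psi> q $ 1 * I $ 1"
    using I0 by (simp add: fps_compose_nth psi_indicator_def)
  then show "I $ 1 \<noteq> 0"
    using inv by auto
qed

lemma psi_basic_seq_psi_basic_poly:
  assumes psi: "psi_seq \<psi>" and q1: "q 1 \<noteq> 0"
  shows "psi_basic_seq \<psi> (psi_series_op \<psi> q) (psi_basic_poly \<psi> (fps_inv (psi_indicator \<psi> q)))"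
proof -
  define c where "c = psi_indicator \<psi> q"
  define I where "I = fps_inv c"
  define s where "s = psi_basic_poly \<psi> I"
  have nz: "\<psi> n \<noteq> 0" for n
    using psi by (simp add: psi_seq_def)
  have I0: "I $ 0 = 0" and I1: "I $ 1 \<noteq> 0" and inv: "c oo I = fps_X"
    using fps_inv_psi_indicator[where q = q, OF psi q1] by (simp_all add: I_def c_def)
  have c0: "c $ 0 = 0"
    by (simp add: c_def psi_indicator_def)
  have cn: "c $ n = q n * \<psi> n" if "n > 0" for n
    using that by (simp add: c_def psi_indicator_def psi_fact_def)
  have coeff_s: "coeff (s k) j = \<psi> j / \<psi> k * (I ^ j) $ k" for k j
    unfolding s_def by (rule coeff_psi_basic_poly[OF I0])
  have deg_le: "degree (s k) \<le> k" for k
    using startsby_zero_power_prefix[OF I0] by (intro degree_le) (auto simp: coeff_s)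
  have "coeff (s k) k \<noteq> 0" for k
    using nz I1 by (simp add: coeff_s startsby_zero_power_nth_same[OF I0])
  then have degree: "degree (s k) = k" for k
    using deg_le by (meson le_antisym le_degree)
  have Qs: "psi_series_op \<psi> q (s k) = smult (n_psi \<psi> k) (s (k - 1))" if k: "k > 0" for k
  proof (rule poly_eqI)
    fix m
    have "coeff (psi_series_op \<psi> q (s k)) m
        = (\<Sum>n\<in>{1..k}. q n * \<psi> n * coeff (s k) (m + n) * \<psi> m / \<psi> (m + n))"
      by (rule coeff_psi_series_op[OF psi deg_le])
    also have "\<dots> = \<psi> m / \<psi> k * (\<Sum>n\<in>{1..k}. c $ n * (I ^ (m + n)) $ k)"
      unfolding sum_distrib_left by (intro sum.cong refl) (auto simp: coeff_s cn nz)
    also have "\<dots> = \<psi> m / \<psi> k * (I ^ m) $ (k - 1)"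
      by (subst sum_nth_mult_power_right_inverse[OF c0 I0 inv k]) (rule refl)
    also have "\<dots> = coeff (smult (n_psi \<psi> k) (s (k - 1))) m"
      using k nz by (simp add: coeff_s n_psi_def)
    finally show "coeff (psi_series_op \<psi> q (s k)) m = coeff (smult (n_psi \<psi> k) (s (k - 1))) m" .
  qed
  have "s 0 = 1"
    using psi by (simp add: s_def psi_basic_poly_def psi_seq_def)
  moreover have "poly (s k) 0 = 0" if "k > 0" for k
    using that by (simp add: poly_0_coeff_0 coeff_s)
  ultimately show ?thesis
    using degree Qs by (simp add: psi_basic_seq_def s_def I_def c_def)
qed

lemma power_const_poly_fps_nth:
  "(Abs_fps (\<lambda>n. [: f $ n :]) ^ i) $ k = [: (f ^ i) $ k :]"
proof (induction i arbitrary: k)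
  case 0
  then show ?case by (simp add: pCons_one)
next
  case (Suc i)
  then show ?case
    by (simp add: fps_mult_nth sum_to_poly mult_to_poly mult.commute)
qed

lemma exp_psi_compose_nth:
  assumes "psi_seq \<psi>"
  shows "(exp_psi \<psi> oo (fps_const [:0, 1:] * Abs_fps (\<lambda>n. [: I $ n :]))) $ k
       = smult (\<psi> k) (psi_basic_poly \<psi> I k)"
proof -
  have "((fps_const [:0, 1:] * Abs_fps (\<lambda>n. [: I $ n :])) ^ i) $ k
      = [:0, 1:] ^ i * [: (I ^ i) $ k :]" for i
    by (simp only: power_mult_distrib fps_const_power fps_mult_left_const_nth
        power_const_poly_fps_nth)
  moreover have "[:\<psi> i:] * ([:0, 1:] ^ i * [: (I ^ i) $ k :]) = monom (\<psi> i * (I ^ i) $ k) i" for i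
    by (simp add: monom_altdef mult_pCons_left mult_pCons_right mult.commute)
  ultimately have "(exp_psi \<psi> oo (fps_const [:0, 1:] * Abs_fps (\<lambda>n. [: I $ n :]))) $ k
      = (\<Sum>i\<le>k. monom (\<psi> i * (I ^ i) $ k) i)"
    by (simp add: fps_compose_nth exp_psi_def psi_fact_def atLeast0AtMost)
  also have "\<dots> = smult (\<psi> k) (psi_basic_poly \<psi> I k)"
    using assms by (intro poly_eqI)
      (simp add: psi_seq_def psi_basic_poly_def coeff_sum coeff_monom sum_distrib_left)
  finally show ?thesis .
qed

theorem mainTheorem7:
  fixes \<psi> :: "nat \<Rightarrow> 'a::field_char_0"
    and q :: "nat \<Rightarrow> 'a"
    and p :: "nat \<Rightarrow> 'a poly"
  assumes psi: "psi_seq \<psi>"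
    and q1: "q 1 \<noteq> 0"
    and delta: "psi_delta_op \<psi> (psi_series_op \<psi> q)"
    and basic: "psi_basic_seq \<psi> (psi_series_op \<psi> q) p"
  shows "Abs_fps (\<lambda>k. smult (1 / psi_fact \<psi> k) (p k))
         = exp_psi \<psi> oo (fps_const [:0, 1:] * Abs_fps (\<lambda>n. [: fps_inv (psi_indicator \<psi> q) $ n :]))"
proof (rule fps_ext)
  fix k
  have "p k = psi_basic_poly \<psi> (fps_inv (psi_indicator \<psi> q)) k"
  proof (rule psi_basic_seq_unique[OF _ _ basic psi_basic_seq_psi_basic_poly[where q = q, OF psi q1]])
    show "psi_series_op \<psi> q (a + b) = psi_series_op \<psi> q a + psi_series_op \<psi> q b" for a b
      using delta by (simp add: psi_delta_op_def)
    show "degree r = 0" if "psi_series_op \<psi> q r = 0" for r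
      using degree_eq_0_if_psi_series_op_eq_0[where q = q, OF psi q1 that] .
  qed
  then show "Abs_fps (\<lambda>k. smult (1 / psi_fact \<psi> k) (p k)) $ k
      = (exp_psi \<psi> oo (fps_const [:0, 1:]
          * Abs_fps (\<lambda>n. [: fps_inv (psi_indicator \<psi> q) $ n :]))) $ k"
    by (simp add: exp_psi_compose_nth[OF psi] psi_fact_def)
qed

end
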